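(* Let $0<c_0<C_0<\infty$ and $\bar\lambda_{m,n}>0$ with $C_0\bar\lambda_{m,n}\le 1/2$, and let $K\ge1$. There exist constants $C_{\mathrm L},C_{\mathrm U}>0$ depending only on $c_0,C_0$ such that for all $\Lambda,\Lambda'\in\mathcal{L}_{K,\bar\lambda_{m,n}}$, $$\frac{C_{\mathrm L}}{\bar\lambda_{m,n}}\|\Lambda-\Lambda'\|_F^2\le \mathrm{d}_{\mathrm{KL}}\big(P^{(nm)}_\Lambda\,\big\|\,P^{(nm)}_{\Lambda'}\big)\le\frac{C_{\mathrm U}}{\bar\lambda_{m,n}}\|\Lambda-\Lambda'\|_F^2.$$
   Context: $\mathcal{L}_{K,\bar\lambda_{m,n}}:=\{\Lambda=(\lambda_{ij})\in\mathbb{R}_+^{n\times m}:\mathrm{rank}(\Lambda)\le K,\ c_0\bar\lambda_{m,n}\le\lambda_{ij}\le C_0\bar\lambda_{m,n}\ \forall (i,j)\in[n]\times[m]\}$. For $\Lambda$ in this class, $P^{(nm)}_\Lambda:=\bigotimes_{i=1}^n\bigotimes_{j=1}^m\mathrm{Bern}(1-e^{-\lambda_{ij}})$ is a product of Bernoulli laws on $\{0,1\}^{n\times m}$. $\mathrm{d}_{\mathrm{KL}}$ is the Kullback–Leibler divergence and $\|\cdot\|_F$ the Frobenius norm. *)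

theory Defs
  imports "HOL-Probability.Probability" "Jordan_Normal_Form.DL_Rank"
begin

definition lowrank_class :: "nat \<Rightarrow> nat \<Rightarrow> nat \<Rightarrow> real \<Rightarrow> real \<Rightarrow> real \<Rightarrow> real mat set" where
  "lowrank_class n m K c0 C0 lbar =
     {L. L \<in> carrier_mat n m \<and> vec_space.rank n L \<le> K \<and>
         (\<forall>i<n. \<forall>j<m. 0 \<le> L $$ (i,j) \<and> c0 * lbar \<le> L $$ (i,j) \<and> L $$ (i,j) \<le> C0 * lbar)}"

text \<open>Product of Bernoulli(1 - exp(-lambda_ij)) laws on {0,1}^{[n] x [m]};
  an outcome is a function on [n] x [m] (value False outside), True encodes 1.\<close>
definition bern_prod :: "nat \<Rightarrow> nat \<Rightarrow> real mat \<Rightarrow> (nat \<times> nat \<Rightarrow> bool) pmf" where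
  "bern_prod n m L = Pi_pmf ({..<n} \<times> {..<m}) False
      (\<lambda>(i,j). bernoulli_pmf (1 - exp (- (L $$ (i,j)))))"

text \<open>KL divergence d_KL(P || Q) (natural logarithm), via the library notion;
  note KL_divergence b M N is the divergence of N from M.\<close>
definition dKL :: "'a pmf \<Rightarrow> 'a pmf \<Rightarrow> real" where
  "dKL P Q = KL_divergence (exp 1) (measure_pmf Q) (measure_pmf P)"

definition frobenius_norm :: "real mat \<Rightarrow> real" where
  "frobenius_norm A = sqrt (\<Sum>i<dim_row A. \<Sum>j<dim_col A. (A $$ (i,j))\<^sup>2)"

end

theory Submission
  imports Defs
begin

text \<open>
  Since the entries are independent, the KL divergence of the two product laws is the sum of the
  KL divergences of the Bernoulli laws of the entries. For Bernoulli parameters \<open>p, q\<close> that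
  divergence lies between \<open>(p - q)\<^sup>2 / (2 max p q)\<close> (a second-order lower bound for \<open>x ln x\<close>) and the
  \<open>\<chi>\<^sup>2\<close>-divergence \<open>(p - q)\<^sup>2 / (q (1 - q))\<close>. On \<open>[0, 1/2]\<close> the map \<open>\<lambda> \<mapsto> 1 - exp (-\<lambda>)\<close> is
  bi-Lipschitz with constants \<open>1/2\<close> and \<open>1\<close>, so with \<open>p \<le> C\<^sub>0 \<lambda>bar\<close> and \<open>q \<ge> c\<^sub>0 \<lambda>bar / 2\<close> each
  summand is comparable to \<open>(\<lambda> - \<lambda>')\<^sup>2 / \<lambda>bar\<close>, with \<open>C\<^sub>L = 1 / (8 C\<^sub>0)\<close> and \<open>C\<^sub>U = 4 / c\<^sub>0\<close>.
\<close>

lemma ln_le_quadratic_if_le_one: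
  fixes y :: real
  assumes "0 < y" "y \<le> 1"
  shows "ln y \<le> (y - 1) - (y - 1)^2 / 2"
proof -
  let ?h = "\<lambda>t::real. ln t - (t - 1) + (t - 1)^2 / 2"
  have "?h y \<le> ?h 1"
  proof (rule DERIV_nonneg_imp_nondecreasing[of y 1 ?h])
    fix x :: real
    assume "y \<le> x" "x \<le> 1"
    then have "0 < x" using assms by auto
    then have "(?h has_real_derivative 1 / x - 1 + (x - 1)) (at x)"
      by (auto intro!: derivative_eq_intros simp: power2_eq_square field_simps)
    moreover have "1 / x - 1 + (x - 1) = (x - 1)^2 / x"
      using \<open>0 < x\<close> by (simp add: field_simps power2_eq_square)
    ultimately show "\<exists>d. (?h has_real_derivative d) (at x) \<and> d \<ge> 0"
      using \<open>0 < x\<close> by auto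
  qed (use assms in auto)
  then show ?thesis by simp
qed

lemma ln_le_half_diff_inverse:
  fixes y :: real
  assumes "1 \<le> y"
  shows "ln y \<le> (y - 1 / y) / 2"
proof -
  let ?h = "\<lambda>t::real. (t - 1 / t) / 2 - ln t"
  have "?h 1 \<le> ?h y"
  proof (rule DERIV_nonneg_imp_nondecreasing[of 1 y ?h])
    fix x :: real
    assume "1 \<le> x" "x \<le> y"
    then have "0 < x" by auto
    then have "(?h has_real_derivative (1 + 1 / x^2) / 2 - 1 / x) (at x)"
      by (auto intro!: derivative_eq_intros simp: power2_eq_square field_simps)
    moreover have "(1 + 1 / x^2) / 2 - 1 / x = (x - 1)^2 / (2 * x^2)"
      using \<open>0 < x\<close> by (simp add: field_simps power2_eq_square)
    ultimately show "\<exists>d. (?h has_real_derivative d) (at x) \<and> d \<ge> 0"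
      by auto
  qed (use assms in auto)
  then show ?thesis by simp
qed

lemma diff_le_mult_ln_divide:
  fixes p q :: real
  assumes "0 < p" "0 < q"
  shows "p - q \<le> p * ln (p / q)"
proof -
  have "ln (q / p) \<le> q / p - 1"
    using assms by (intro ln_le_minus_one) auto
  then have "p * ln (q / p) \<le> p * (q / p - 1)"
    using assms by (simp add: mult_left_mono)
  also have "\<dots> = q - p"
    using assms by (simp add: field_simps)
  finally show ?thesis
    using assms by (simp add: ln_div algebra_simps)
qed

lemma mult_ln_divide_le_chi_square:
  fixes p q :: real
  assumes "0 < p" "0 < q"
  shows "p * ln (p / q) \<le> p - q + (p - q)^2 / q"
proof -
  have "ln (p / q) \<le> p / q - 1"
    using assms by (intro ln_le_minus_one) auto
  then have "p * ln (p / q) \<le> p * (p / q - 1)"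
    using assms by (simp add: mult_left_mono)
  also have "\<dots> = p - q + (p - q)^2 / q"
    using assms by (simp add: field_simps power2_eq_square)
  finally show ?thesis .
qed

lemma diff_plus_square_le_mult_ln_divide:
  fixes p q M :: real
  assumes "0 < p" "0 < q" "p \<le> M" "q \<le> M"
  shows "p - q + (p - q)^2 / (2 * M) \<le> p * ln (p / q)"
proof -
  have ln_pq: "p * ln (p / q) = - p * ln (q / p)"
    using assms by (simp add: ln_div algebra_simps)
  have "p - q + (p - q)^2 / (2 * max p q) \<le> p * ln (p / q)"
  proof (cases "q \<le> p")
    case True
    then have "ln (q / p) \<le> (q / p - 1) - (q / p - 1)^2 / 2"
      using assms by (intro ln_le_quadratic_if_le_one) auto
    then have "p * ln (q / p) \<le> p * ((q / p - 1) - (q / p - 1)^2 / 2)"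
      using assms by (simp add: mult_left_mono)
    also have "\<dots> = q - p - (p - q)^2 / (2 * p)"
      using assms by (simp add: field_simps power2_eq_square)
    finally show ?thesis
      using True ln_pq by (simp add: max_def)
  next
    case False
    then have "ln (q / p) \<le> (q / p - p / q) / 2"
      using assms ln_le_half_diff_inverse[of "q / p"] by auto
    then have "p * ln (q / p) \<le> p * ((q / p - p / q) / 2)"
      using assms by (simp add: mult_left_mono)
    also have "\<dots> = q - p - (p - q)^2 / (2 * q)"
      using assms by (simp add: field_simps power2_eq_square)
    finally show ?thesis
      using False ln_pq by (simp add: max_def)
  qed
  moreover have "(p - q)^2 / (2 * M) \<le> (p - q)^2 / (2 * max p q)"
    using assms by (intro divide_left_mono) auto
  ultimately show ?thesis
    by linarith
qed

lemma dKL_eq_integral_ln_pmf_ratio: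
  fixes P Q :: "'a pmf"
  assumes supp: "set_pmf P \<subseteq> set_pmf Q"
  shows "dKL P Q = (\<integral>x. ln (pmf P x / pmf Q x) \<partial>measure_pmf P)"
proof -
  define f where "f x = ennreal (pmf P x / pmf Q x)" for x
  have "ennreal (pmf Q x) * f x = ennreal (pmf P x)" for x
  proof (cases "x \<in> set_pmf Q")
    case True
    then show ?thesis
      by (auto simp: f_def set_pmf_iff simp flip: ennreal_mult)
  next
    case False
    then show ?thesis
      using supp by (auto simp: f_def set_pmf_eq)
  qed
  then have "density (measure_pmf Q) f = measure_pmf P"
    unfolding measure_pmf_eq_density[of Q] measure_pmf_eq_density[of P]
    by (subst density_density_eq) auto
  then have "AE x in measure_pmf Q. f x = RN_deriv (measure_pmf Q) (measure_pmf P) x"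
    by (intro RN_deriv_unique_sigma_finite)
      (auto simp: prob_space_imp_sigma_finite prob_space_measure_pmf)
  then have RN: "RN_deriv (measure_pmf Q) (measure_pmf P) x = f x" if "x \<in> set_pmf P" for x
    using that supp by (auto simp: AE_measure_pmf_iff)
  have "dKL P Q =
      (\<integral>x. log (exp 1) (enn2real (RN_deriv (measure_pmf Q) (measure_pmf P) x)) \<partial>measure_pmf P)"
    by (simp add: dKL_def KL_divergence_def entropy_density_def comp_def)
  also have "\<dots> = (\<integral>x. ln (pmf P x / pmf Q x) \<partial>measure_pmf P)"
    by (intro integral_cong_AE) (auto simp: AE_measure_pmf_iff RN f_def log_def)
  finally show ?thesis .
qed

lemma dKL_Pi_pmf:
  fixes P Q :: "'a \<Rightarrow> 'b pmf"
  assumes A: "finite A"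
    and fin: "\<And>a. a \<in> A \<Longrightarrow> finite (set_pmf (P a))"
    and supp: "\<And>a. a \<in> A \<Longrightarrow> set_pmf (P a) \<subseteq> set_pmf (Q a)"
  shows "dKL (Pi_pmf A d P) (Pi_pmf A d Q) = (\<Sum>a\<in>A. dKL (P a) (Q a))"
proof -
  let ?P = "Pi_pmf A d P" and ?Q = "Pi_pmf A d Q"
  let ?g = "\<lambda>a y. ln (pmf (P a) y / pmf (Q a) y)"
  have set_P: "set_pmf ?P = PiE_dflt A d (set_pmf \<circ> P)"
    using A by (rule set_Pi_pmf)
  have "set_pmf ?P \<subseteq> set_pmf ?Q"
    using supp by (auto simp: set_P set_Pi_pmf[OF A] PiE_dflt_def)
  then have "dKL ?P ?Q = (\<integral>x. ln (pmf ?P x / pmf ?Q x) \<partial>measure_pmf ?P)"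
    by (rule dKL_eq_integral_ln_pmf_ratio)
  also have "\<dots> = (\<integral>x. (\<Sum>a\<in>A. ?g a (x a)) \<partial>measure_pmf ?P)"
  proof (intro integral_cong_AE)
    show "AE x in measure_pmf ?P. ln (pmf ?P x / pmf ?Q x) = (\<Sum>a\<in>A. ?g a (x a))"
    proof (unfold AE_measure_pmf_iff, intro ballI)
      fix x
      assume "x \<in> set_pmf ?P"
      then have out: "\<And>y. y \<notin> A \<Longrightarrow> x y = d" and "\<And>a. a \<in> A \<Longrightarrow> x a \<in> set_pmf (P a)"
        by (auto simp: set_P PiE_dflt_def)
      then have pos: "\<And>a. a \<in> A \<Longrightarrow> 0 < pmf (P a) (x a) \<and> 0 < pmf (Q a) (x a)"
        using supp by (auto intro!: pmf_positive)
      have "ln (pmf ?P x / pmf ?Q x) = ln (\<Prod>a\<in>A. pmf (P a) (x a) / pmf (Q a) (x a))"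
        using out by (simp add: pmf_Pi'[OF A] prod_dividef)
      also have "\<dots> = (\<Sum>a\<in>A. ?g a (x a))"
        using A pos by (intro ln_prod) (auto dest!: pos)
      finally show "ln (pmf ?P x / pmf ?Q x) = (\<Sum>a\<in>A. ?g a (x a))" .
    qed
  qed auto
  also have "\<dots> = (\<Sum>a\<in>A. \<integral>x. ?g a (x a) \<partial>measure_pmf ?P)"
    using A fin by (intro Bochner_Integration.integral_sum integrable_measure_pmf_finite)
      (auto simp: set_P)
  also have "\<dots> = (\<Sum>a\<in>A. dKL (P a) (Q a))"
  proof (intro sum.cong refl)
    fix a
    assume "a \<in> A"
    have "(\<integral>x. ?g a (x a) \<partial>measure_pmf ?P) = (\<integral>y. ?g a y \<partial>measure_pmf (map_pmf (\<lambda>x. x a) ?P))"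
      by simp
    also have "map_pmf (\<lambda>x. x a) ?P = P a"
      using \<open>a \<in> A\<close> by (simp add: Pi_pmf_component[OF A])
    finally show "(\<integral>x. ?g a (x a) \<partial>measure_pmf ?P) = dKL (P a) (Q a)"
      using supp[OF \<open>a \<in> A\<close>] by (simp add: dKL_eq_integral_ln_pmf_ratio)
  qed
  finally show ?thesis .
qed

lemma dKL_bernoulli_pmf:
  assumes "0 < p" "p < 1" "0 < q" "q < 1"
  shows "dKL (bernoulli_pmf p) (bernoulli_pmf q) = p * ln (p / q) + (1 - p) * ln ((1 - p) / (1 - q))"
  using assms by (simp add: dKL_eq_integral_ln_pmf_ratio)

lemma dKL_bernoulli_pmf_ge:
  assumes "0 < p" "p < 1" "0 < q" "q < 1" "p \<le> M" "q \<le> M"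
  shows "(p - q)^2 / (2 * M) \<le> dKL (bernoulli_pmf p) (bernoulli_pmf q)"
proof -
  have "p - q + (p - q)^2 / (2 * M) \<le> p * ln (p / q)"
    using assms by (intro diff_plus_square_le_mult_ln_divide) auto
  moreover have "(1 - p) - (1 - q) \<le> (1 - p) * ln ((1 - p) / (1 - q))"
    using assms by (intro diff_le_mult_ln_divide) auto
  ultimately show ?thesis
    using assms by (simp add: dKL_bernoulli_pmf)
qed

lemma dKL_bernoulli_pmf_le:
  assumes "0 < p" "p < 1" "0 < q" "q < 1"
  shows "dKL (bernoulli_pmf p) (bernoulli_pmf q) \<le> (p - q)^2 / (q * (1 - q))"
proof -
  have "p * ln (p / q) \<le> p - q + (p - q)^2 / q"
    using assms by (intro mult_ln_divide_le_chi_square)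
  moreover have "(1 - p) * ln ((1 - p) / (1 - q)) \<le> (1 - p) - (1 - q) + ((1 - p) - (1 - q))^2 / (1 - q)"
    using assms by (intro mult_ln_divide_le_chi_square) auto
  moreover have "(p - q)^2 / q + (p - q)^2 / (1 - q) = (p - q)^2 / (q * (1 - q))"
    using assms by (simp add: field_simps)
  ultimately show ?thesis
    using assms by (simp add: dKL_bernoulli_pmf power2_commute)
qed

lemma exp_neg_diff_bounds:
  fixes a b :: real
  assumes "0 \<le> a" "a \<le> b" "b \<le> 1/2"
  shows "(b - a) / 2 \<le> exp (-a) - exp (-b)" and "exp (-a) - exp (-b) \<le> b - a"
proof -
  have "exp (-a) - exp (-b) = exp (-b) * (exp (b - a) - 1)"
    by (simp add: algebra_simps flip: exp_add)
  also have "\<dots> \<ge> (1/2) * (b - a)"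
  proof (intro mult_mono)
    show "b - a \<le> exp (b - a) - 1"
      using exp_ge_add_one_self[of "b - a"] by linarith
    show "1/2 \<le> exp (-b)"
      using exp_ge_add_one_self[of "-b"] assms by linarith
  qed (use assms in auto)
  finally show "(b - a) / 2 \<le> exp (-a) - exp (-b)"
    by simp
  have "exp (-a) - exp (-b) = exp (-a) * (1 - exp (a - b))"
    by (simp add: algebra_simps flip: exp_add)
  also have "\<dots> \<le> 1 * (b - a)"
  proof (intro mult_mono)
    show "1 - exp (a - b) \<le> b - a"
      using exp_ge_add_one_self[of "a - b"] by linarith
  qed (use assms in auto)
  finally show "exp (-a) - exp (-b) \<le> b - a"
    by simp
qed

lemma square_exp_neg_diff_bounds:
  fixes a b :: real
  assumes "0 \<le> a" "a \<le> 1/2" "0 \<le> b" "b \<le> 1/2"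
  shows "(a - b)^2 / 4 \<le> (exp (-a) - exp (-b))^2" and "(exp (-a) - exp (-b))^2 \<le> (a - b)^2"
proof -
  have "\<bar>a - b\<bar> / 2 \<le> \<bar>exp (-a) - exp (-b)\<bar> \<and> \<bar>exp (-a) - exp (-b)\<bar> \<le> \<bar>a - b\<bar>"
  proof (cases "a \<le> b")
    case True
    then show ?thesis
      using exp_neg_diff_bounds[of a b] assms by auto
  next
    case False
    then show ?thesis
      using exp_neg_diff_bounds[of b a] assms by auto
  qed
  then have "(\<bar>a - b\<bar> / 2)^2 \<le> \<bar>exp (-a) - exp (-b)\<bar>^2" "\<bar>exp (-a) - exp (-b)\<bar>^2 \<le> \<bar>a - b\<bar>^2"
    by (intro power_mono; simp)+
  then show "(a - b)^2 / 4 \<le> (exp (-a) - exp (-b))^2" "(exp (-a) - exp (-b))^2 \<le> (a - b)^2"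
    by (simp_all add: power_divide)
qed

lemma dKL_bernoulli_pmf_exp_bounds:
  fixes a b c C :: real
  assumes c: "0 < c" and a: "c \<le> a" "a \<le> C" and b: "c \<le> b" "b \<le> C" and C: "C \<le> 1/2"
  defines "p \<equiv> 1 - exp (-a)" and "q \<equiv> 1 - exp (-b)"
  shows "(a - b)^2 / (8 * C) \<le> dKL (bernoulli_pmf p) (bernoulli_pmf q)"
    and "dKL (bernoulli_pmf p) (bernoulli_pmf q) \<le> 4 * (a - b)^2 / c"
proof -
  have "a / 2 \<le> p" "p \<le> a" "b / 2 \<le> q" "q \<le> b"
    using exp_neg_diff_bounds[of 0 a] exp_neg_diff_bounds[of 0 b] a b c C by (auto simp: p_def q_def)
  moreover have "1/2 \<le> 1 - q"
    using exp_ge_add_one_self[of "-b"] b C by (simp add: q_def)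
  moreover have "(a - b)^2 / 4 \<le> (p - q)^2" "(p - q)^2 \<le> (a - b)^2"
    using square_exp_neg_diff_bounds[of b a] a b c C by (auto simp: p_def q_def power2_commute)
  ultimately have p: "0 < p" "p < 1" "p \<le> C" and q: "0 < q" "q < 1" "q \<le> C" "c / 4 \<le> q * (1 - q)"
    and sq: "(a - b)^2 / 4 \<le> (p - q)^2" "(p - q)^2 \<le> (a - b)^2"
    using a b c C mult_mono[of "c / 2" q "1/2" "1 - q"] by auto
  have "(a - b)^2 / (8 * C) = ((a - b)^2 / 4) / (2 * C)"
    by simp
  also have "\<dots> \<le> (p - q)^2 / (2 * C)"
    using sq a c by (intro divide_right_mono) auto
  also have "\<dots> \<le> dKL (bernoulli_pmf p) (bernoulli_pmf q)"
    using p q by (intro dKL_bernoulli_pmf_ge) auto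
  finally show "(a - b)^2 / (8 * C) \<le> dKL (bernoulli_pmf p) (bernoulli_pmf q)" .
  have "dKL (bernoulli_pmf p) (bernoulli_pmf q) \<le> (p - q)^2 / (q * (1 - q))"
    using p q by (intro dKL_bernoulli_pmf_le) auto
  also have "\<dots> \<le> (a - b)^2 / (c / 4)"
    using sq q c by (intro frac_le) auto
  finally show "dKL (bernoulli_pmf p) (bernoulli_pmf q) \<le> 4 * (a - b)^2 / c"
    by (simp add: mult.commute)
qed

lemma bern_prod_eq_Pi_pmf:
  "bern_prod n m L = Pi_pmf ({..<n} \<times> {..<m}) False (\<lambda>a. bernoulli_pmf (1 - exp (- (L $$ a))))"
  unfolding bern_prod_def by (intro Pi_pmf_cong) auto

lemma dKL_bern_prod:
  assumes "\<And>i j. i < n \<Longrightarrow> j < m \<Longrightarrow> 0 < L' $$ (i, j)"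
  shows "dKL (bern_prod n m L) (bern_prod n m L') =
    (\<Sum>a\<in>{..<n} \<times> {..<m}. dKL (bernoulli_pmf (1 - exp (- (L $$ a)))) (bernoulli_pmf (1 - exp (- (L' $$ a)))))"
  unfolding bern_prod_eq_Pi_pmf using assms by (intro dKL_Pi_pmf) auto

lemma frobenius_norm_diff_power2:
  assumes "L \<in> carrier_mat n m" "L' \<in> carrier_mat n m"
  shows "(frobenius_norm (L - L'))^2 = (\<Sum>a\<in>{..<n} \<times> {..<m}. (L $$ a - L' $$ a)^2)"
proof -
  have "(frobenius_norm (L - L'))^2 = (\<Sum>i<n. \<Sum>j<m. ((L - L') $$ (i, j))^2)"
    unfolding frobenius_norm_def using assms by (simp add: sum_nonneg)
  also have "\<dots> = (\<Sum>a\<in>{..<n} \<times> {..<m}. (L $$ a - L' $$ a)^2)"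
    using assms by (simp add: sum.cartesian_product case_prod_beta)
  finally show ?thesis .
qed

theorem theoremL6:
  fixes c0 C0 :: real
  assumes "0 < c0" and "c0 < C0"
  shows "\<exists>CL CU :: real. 0 < CL \<and> 0 < CU \<and>
    (\<forall>(lbar::real) (K::nat) (n::nat) (m::nat) L L'.
       0 < lbar \<longrightarrow> C0 * lbar \<le> 1/2 \<longrightarrow> 1 \<le> K \<longrightarrow>
       L \<in> lowrank_class n m K c0 C0 lbar \<longrightarrow> L' \<in> lowrank_class n m K c0 C0 lbar \<longrightarrow>
       CL / lbar * (frobenius_norm (L - L'))\<^sup>2 \<le> dKL (bern_prod n m L) (bern_prod n m L') \<and>
       dKL (bern_prod n m L) (bern_prod n m L') \<le> CU / lbar * (frobenius_norm (L - L'))\<^sup>2)"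
proof (intro exI conjI allI impI)
  show "0 < 1 / (8 * C0)" "0 < 4 / c0"
    using assms by auto
  fix lbar :: real and K n m :: nat and L L' :: "real mat"
  assume lbar: "0 < lbar" "C0 * lbar \<le> 1/2"
    and "L \<in> lowrank_class n m K c0 C0 lbar" "L' \<in> lowrank_class n m K c0 C0 lbar"
  then have carrier: "L \<in> carrier_mat n m" "L' \<in> carrier_mat n m"
    and entries: "\<And>a. a \<in> {..<n} \<times> {..<m} \<Longrightarrow>
      c0 * lbar \<le> L $$ a \<and> L $$ a \<le> C0 * lbar \<and> c0 * lbar \<le> L' $$ a \<and> L' $$ a \<le> C0 * lbar"
    by (auto simp: lowrank_class_def)
  have "0 < c0 * lbar"
    using assms lbar by simp
  note entry_bounds = dKL_bernoulli_pmf_exp_bounds[OF this _ _ _ _ lbar(2)]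
  have dKL_sum: "dKL (bern_prod n m L) (bern_prod n m L') =
    (\<Sum>a\<in>{..<n} \<times> {..<m}. dKL (bernoulli_pmf (1 - exp (- (L $$ a)))) (bernoulli_pmf (1 - exp (- (L' $$ a)))))"
    using entries \<open>0 < c0 * lbar\<close> by (intro dKL_bern_prod) force
  show "1 / (8 * C0) / lbar * (frobenius_norm (L - L'))\<^sup>2 \<le> dKL (bern_prod n m L) (bern_prod n m L')"
    unfolding dKL_sum frobenius_norm_diff_power2[OF carrier] sum_distrib_left
    using entry_bounds(1) entries by (intro sum_mono) (simp add: field_simps)
  show "dKL (bern_prod n m L) (bern_prod n m L') \<le> 4 / c0 / lbar * (frobenius_norm (L - L'))\<^sup>2"
    unfolding dKL_sum frobenius_norm_diff_power2[OF carrier] sum_distrib_left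
    using entry_bounds(2) entries by (intro sum_mono) (simp add: field_simps)
qed

end
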